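(* Let $\mathcal H$ and $\mathcal H'$ be hypergraphs such that for any $\sigma\in\mathcal H$ and any $\sigma'\in\mathcal H'$, either $\sigma\cap\sigma'=\emptyset$ or $\sigma\cap\sigma'\in\mathcal H\cap\mathcal H'$. Then there are long exact sequences of relative embedded homology $$\cdots\to H_n(\mathcal H\cap\mathcal H',\delta\mathcal H\cap\delta\mathcal H')\to H_n(\mathcal H,\delta\mathcal H)\oplus H_n(\mathcal H',\delta\mathcal H')\to H_n(\mathcal H\cup\mathcal H',\delta\mathcal H\cup\delta\mathcal H')\to H_{n-1}(\mathcal H\cap\mathcal H',\delta\mathcal H\cap\delta\mathcal H')\to\cdots$$ and $$\cdots\to H_n(\Delta\mathcal H\cap\Delta\mathcal H',\mathcal H\cap\mathcal H')\to H_n(\Delta\mathcal H,\mathcal H)\oplus H_n(\Delta\mathcal H',\mathcal H')\to H_n(\Delta\mathcal H\cup\Delta\mathcal H',\mathcal H\cup\mathcal H')\to H_{n-1}(\Delta\mathcal H\cap\Delta\mathcal H',\mathcal H\cap\mathcal H')\to\cdots.$$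
   Context: A hypergraph is a finite set of nonempty finite subsets of a vertex set (hyperedges); an $n$-hyperedge has $n+1$ vertices. Unions and intersections are of sets of hyperedges. The associated simplicial complex is $\Delta\mathcal H=\{\sigma\ne\emptyset:\sigma\subseteq\tau\text{ for some }\tau\in\mathcal H\}$; the lower-associated simplicial complex is $\delta\mathcal H=\{\sigma\in\mathcal H:\text{every nonempty }\tau\subseteq\sigma\text{ lies in }\mathcal H\}$. Fix an abelian coefficient group $G$; chains are simplicial chains with coefficients in $G$ with boundary $\partial$; $G(\mathcal H)_n$ is the group of $G$-linear combinations of $n$-hyperedges of $\mathcal H$; $\mathrm{Inf}_n(\mathcal H)=G(\mathcal H)_n\cap\partial_n^{-1}(G(\mathcal H)_{n-1})$. For $\mathcal A\subseteq\mathcal B$, relative embedded homology is $H_n(\mathcal B,\mathcal A)=H_n(\mathrm{Inf}_*(\mathcal B)/\mathrm{Inf}_*(\mathcal A))$. *)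

theory Defs
  imports "HOL-Algebra.Algebra"
begin

text \<open>A hypergraph on vertex type 'v is a finite set of nonempty finite vertex sets.
  Vertices are linearly ordered; the order is used to orient simplices for the boundary.\<close>

definition hypergraph :: "'v set set \<Rightarrow> bool" where
  "hypergraph HH \<longleftrightarrow> finite HH \<and> (\<forall>\<sigma>\<in>HH. finite \<sigma> \<and> \<sigma> \<noteq> {})"

definition assoc_cplx :: "'v set set \<Rightarrow> 'v set set" where
  "assoc_cplx HH = {\<sigma>. \<sigma> \<noteq> {} \<and> (\<exists>\<tau>\<in>HH. \<sigma> \<subseteq> \<tau>)}"

definition lower_cplx :: "'v set set \<Rightarrow> 'v set set" where
  "lower_cplx HH = {\<sigma>\<in>HH. \<forall>\<tau>. \<tau> \<noteq> {} \<and> \<tau> \<subseteq> \<sigma> \<longrightarrow> \<tau> \<in> HH}"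

text \<open>A chain is a finitely supported function from vertex sets to the coefficient group.\<close>
definition csupp :: "('v set \<Rightarrow> 'g::zero) \<Rightarrow> 'v set set" where
  "csupp c = {\<sigma>. c \<sigma> \<noteq> 0}"

text \<open>G(HH)_n: linear combinations of n-hyperedges of HH (hyperedges with n+1 vertices).
  Degrees are integers; in negative degrees this group is trivial.\<close>
definition Gchains :: "'v set set \<Rightarrow> int \<Rightarrow> ('v set \<Rightarrow> 'g::zero) set" where
  "Gchains HH n = {c. finite (csupp c) \<and>
      (\<forall>\<sigma>\<in>csupp c. \<sigma> \<in> HH \<and> finite \<sigma> \<and> \<sigma> \<noteq> {} \<and> int (card \<sigma>) = n + 1)}"

text \<open>Simplicial boundary: for sigma = {v0 < ... < vn}, boundary sigma = sum_i (-1)^i (sigma - {vi}). No augmentation: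
  the boundary of a 0-chain is 0.\<close>
definition bd :: "('v::linorder set \<Rightarrow> 'g::ab_group_add) \<Rightarrow> 'v set \<Rightarrow> 'g" where
  "bd c \<tau> = (if \<tau> = {} then 0 else
     (\<Sum>v\<in>{v. v \<notin> \<tau> \<and> insert v \<tau> \<in> csupp c}.
        (if even (card {w\<in>\<tau>. w < v}) then c (insert v \<tau>) else - c (insert v \<tau>))))"

definition inf_chains :: "'v::linorder set set \<Rightarrow> int \<Rightarrow> ('v set \<Rightarrow> 'g::ab_group_add) set" where
  "inf_chains HH n = {c \<in> Gchains HH n. bd c \<in> Gchains HH (n - 1)}"

definition cadd :: "('v set \<Rightarrow> 'g::ab_group_add) \<Rightarrow> ('v set \<Rightarrow> 'g) \<Rightarrow> 'v set \<Rightarrow> 'g" where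
  "cadd x y = (\<lambda>\<sigma>. x \<sigma> + y \<sigma>)"

text \<open>Cycles of the quotient complex, lifted to Inf_n(B).\<close>
definition rel_cycles :: "'v::linorder set set \<Rightarrow> 'v set set \<Rightarrow> int \<Rightarrow> ('v set \<Rightarrow> 'g::ab_group_add) set" where
  "rel_cycles B A n = {c \<in> inf_chains B n. bd c \<in> inf_chains A (n - 1)}"

text \<open>Boundaries of the quotient complex, lifted to Inf_n(B) (including Inf_n(A)).\<close>
definition rel_bounds :: "'v::linorder set set \<Rightarrow> 'v set set \<Rightarrow> int \<Rightarrow> ('v set \<Rightarrow> 'g::ab_group_add) set" where
  "rel_bounds B A n = {cadd (bd d) a | d a. d \<in> inf_chains B (n + 1) \<and> a \<in> inf_chains A n}"

definition chain_monoid :: "('v set \<Rightarrow> 'g::ab_group_add) set \<Rightarrow> ('v set \<Rightarrow> 'g) monoid" where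
  "chain_monoid S = \<lparr>carrier = S, monoid.mult = cadd, one = (\<lambda>_. 0)\<rparr>"

definition rel_homology :: "'v::linorder set set \<Rightarrow> 'v set set \<Rightarrow> int \<Rightarrow> ('v set \<Rightarrow> 'g::ab_group_add) set monoid" where
  "rel_homology B A n = chain_monoid (rel_cycles B A n) Mod rel_bounds B A n"

text \<open>Map H_n(B,A) \<rightarrow> H_n(B',A') induced by the inclusion of pairs (class of c \<mapsto> class of c).\<close>
definition induced :: "'v::linorder set set \<Rightarrow> 'v set set \<Rightarrow> int \<Rightarrow> ('v set \<Rightarrow> 'g::ab_group_add) set \<Rightarrow> ('v set \<Rightarrow> 'g) set" where
  "induced B' A' n Q = (\<lambda>h. cadd h (SOME c. c \<in> Q)) ` rel_bounds B' A' n"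

definition mv_f :: "'v::linorder set set \<Rightarrow> 'v set set \<Rightarrow> 'v set set \<Rightarrow> 'v set set \<Rightarrow> int
    \<Rightarrow> ('v set \<Rightarrow> 'g::ab_group_add) set \<Rightarrow> ('v set \<Rightarrow> 'g) set \<times> ('v set \<Rightarrow> 'g) set" where
  "mv_f B1 A1 B2 A2 n Q = (induced B1 A1 n Q, induced B2 A2 n Q)"

definition mv_g :: "'v::linorder set set \<Rightarrow> 'v set set \<Rightarrow> 'v set set \<Rightarrow> 'v set set \<Rightarrow> int
    \<Rightarrow> ('v set \<Rightarrow> 'g::ab_group_add) set \<times> ('v set \<Rightarrow> 'g) set \<Rightarrow> ('v set \<Rightarrow> 'g) set" where
  "mv_g B1 A1 B2 A2 n Y =
     induced (B1 \<union> B2) (A1 \<union> A2) n (fst Y) \<otimes>\<^bsub>rel_homology (B1 \<union> B2) (A1 \<union> A2) n\<^esub>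
     inv\<^bsub>rel_homology (B1 \<union> B2) (A1 \<union> A2) n\<^esub> (induced (B1 \<union> B2) (A1 \<union> A2) n (snd Y))"

definition MV_long_exact :: "'g::ab_group_add itself \<Rightarrow> 'v::linorder set set \<Rightarrow> 'v set set
    \<Rightarrow> 'v set set \<Rightarrow> 'v set set \<Rightarrow> bool" where
  "MV_long_exact _ B1 A1 B2 A2 \<longleftrightarrow>
    (\<exists>conn :: int \<Rightarrow> ('v set \<Rightarrow> 'g) set \<Rightarrow> ('v set \<Rightarrow> 'g) set.
      \<forall>n::int.
        (mv_f B1 A1 B2 A2 n :: ( 'v set \<Rightarrow> 'g) set \<Rightarrow> _) \<in> hom (rel_homology (B1 \<inter> B2) (A1 \<inter> A2) n)
                                (rel_homology B1 A1 n \<times>\<times> rel_homology B2 A2 n) \<and>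
        (mv_g B1 A1 B2 A2 n :: _ \<Rightarrow> ('v set \<Rightarrow> 'g) set) \<in> hom (rel_homology B1 A1 n \<times>\<times> rel_homology B2 A2 n)
                                (rel_homology (B1 \<union> B2) (A1 \<union> A2) n) \<and>
        conn n \<in> hom (rel_homology (B1 \<union> B2) (A1 \<union> A2) n)
                     (rel_homology (B1 \<inter> B2) (A1 \<inter> A2) (n - 1)) \<and>
        (mv_f B1 A1 B2 A2 n :: ('v set \<Rightarrow> 'g) set \<Rightarrow> _) ` carrier (rel_homology (B1 \<inter> B2) (A1 \<inter> A2) n)
          = kernel (rel_homology B1 A1 n \<times>\<times> rel_homology B2 A2 n)
                   (rel_homology (B1 \<union> B2) (A1 \<union> A2) n) (mv_g B1 A1 B2 A2 n) \<and>
        mv_g B1 A1 B2 A2 n ` carrier (rel_homology B1 A1 n \<times>\<times> rel_homology B2 A2 n)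
          = kernel (rel_homology (B1 \<union> B2) (A1 \<union> A2) n)
                   (rel_homology (B1 \<inter> B2) (A1 \<inter> A2) (n - 1)) (conn n) \<and>
        conn n ` carrier (rel_homology (B1 \<union> B2) (A1 \<union> A2) n)
          = kernel (rel_homology (B1 \<inter> B2) (A1 \<inter> A2) (n - 1))
                   (rel_homology B1 A1 (n - 1) \<times>\<times> rel_homology B2 A2 (n - 1))
                   (mv_f B1 A1 B2 A2 (n - 1)))"

end

theory Submission
  imports Defs "HOL-Library.Function_Algebras"
begin

text \<open>Under the intersection hypothesis every infimum chain of \<open>Q \<union> Y\<close> is the sum of an
  infimum chain of \<open>Q\<close> (its restriction to \<open>Q\<close>) and one of \<open>Y\<close>, while infimum chains of
  \<open>Q \<inter> Y\<close> are exactly those lying in both. So \<open>Inf(Q \<inter> Y) \<rightarrow> Inf(Q) \<oplus> Inf(Y) \<rightarrow> Inf(Q \<union> Y)\<close>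
  is a short exact sequence of chain complexes, for the big hypergraphs and for the small ones of
  both pairs. The complexes \<open>\<delta>H\<close> and \<open>\<Delta>H\<close> are closed under taking faces, which implies the
  hypothesis for them, and \<open>\<delta>H \<subseteq> H \<subseteq> \<Delta>H\<close>. Passing to the quotient complexes and chasing
  the diagram as in the snake lemma yields the long exact sequence.\<close>

lemma cadd_eq_plus: "cadd x y = x + y"
  by (simp add: cadd_def fun_eq_iff)

section \<open>The simplicial boundary\<close>

definition alt_sign :: "nat \<Rightarrow> 'g::ab_group_add \<Rightarrow> 'g" where
  "alt_sign k x = (if even k then x else - x)"

definition count_below :: "'v::linorder set \<Rightarrow> 'v \<Rightarrow> nat" where
  "count_below \<tau> v = card {w\<in>\<tau>. w < v}"

definition coface_vertices :: "('v set \<Rightarrow> 'g::zero) \<Rightarrow> 'v set \<Rightarrow> 'v set" where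
  "coface_vertices c \<tau> = {v. v \<notin> \<tau> \<and> insert v \<tau> \<in> csupp c}"

lemma alt_sign_0 [simp]: "alt_sign k 0 = 0"
  and alt_sign_add: "alt_sign k (a + b) = alt_sign k a + alt_sign k b"
  and alt_sign_minus: "alt_sign k (- a) = - alt_sign k a"
  and alt_sign_alt_sign: "alt_sign k (alt_sign m a) = alt_sign (k + m) a"
  by (simp_all add: alt_sign_def)

lemma alt_sign_sum: "finite F \<Longrightarrow> alt_sign k (\<Sum>v\<in>F. f v) = (\<Sum>v\<in>F. alt_sign k (f v))"
  by (simp add: alt_sign_def sum_negf)

lemma bd_eq_sum:
  "bd c \<tau> = (if \<tau> = {} then 0
     else \<Sum>v\<in>coface_vertices c \<tau>. alt_sign (count_below \<tau> v) (c (insert v \<tau>)))"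
  by (simp add: bd_def alt_sign_def count_below_def coface_vertices_def)

lemma finite_coface_vertices:
  assumes "finite (csupp c)"
  shows "finite (coface_vertices c \<tau>)"
proof -
  have "inj_on (\<lambda>v. insert v \<tau>) (coface_vertices c \<tau>)"
    by (rule inj_onI) (auto simp: coface_vertices_def dest: insert_ident)
  moreover have "(\<lambda>v. insert v \<tau>) ` coface_vertices c \<tau> \<subseteq> csupp c"
    by (auto simp: coface_vertices_def)
  ultimately show ?thesis
    using assms by (metis finite_imageD finite_subset)
qed

lemma bd_eq_sum_superset:
  assumes "finite F" "coface_vertices c \<tau> \<subseteq> F" "F \<inter> \<tau> = {}" "\<tau> \<noteq> {}"
  shows "bd c \<tau> = (\<Sum>v\<in>F. alt_sign (count_below \<tau> v) (c (insert v \<tau>)))"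
  unfolding bd_eq_sum using assms
  by (simp, intro sum.mono_neutral_left) (auto simp: coface_vertices_def csupp_def)

lemma bd_empty [simp]: "bd c {} = 0"
  by (simp add: bd_def)

lemma bd_nonzero_imp_coface:
  assumes "bd c \<tau> \<noteq> 0"
  shows "\<tau> \<noteq> {} \<and> (\<exists>v. v \<notin> \<tau> \<and> insert v \<tau> \<in> csupp c)"
proof -
  have "\<tau> \<noteq> {}" "coface_vertices c \<tau> \<noteq> {}"
    using assms by (auto simp: bd_eq_sum split: if_splits)
  then show ?thesis
    by (auto simp: coface_vertices_def)
qed

lemma csupp_bd: "csupp (bd c) \<subseteq> {\<tau>. \<tau> \<noteq> {} \<and> (\<exists>v. v \<notin> \<tau> \<and> insert v \<tau> \<in> csupp c)}"
  using bd_nonzero_imp_coface by (auto simp: csupp_def)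

lemma csupp_add: "csupp (x + y) \<subseteq> csupp x \<union> csupp (y :: 'a set \<Rightarrow> 'g::ab_group_add)"
  by (auto simp: csupp_def)

lemma csupp_uminus [simp]: "csupp (- x) = csupp (x :: 'a set \<Rightarrow> 'g::ab_group_add)"
  by (auto simp: csupp_def)

lemma bd_add:
  assumes "finite (csupp x)" "finite (csupp y)"
  shows "bd (x + y) = bd x + bd y"
proof
  fix \<tau>
  show "bd (x + y) \<tau> = (bd x + bd y) \<tau>"
  proof (cases "\<tau> = {}")
    case False
    let ?F = "coface_vertices x \<tau> \<union> coface_vertices y \<tau>"
    have F: "finite ?F" "?F \<inter> \<tau> = {}"
      using assms finite_coface_vertices by (auto simp: coface_vertices_def)
    have "coface_vertices (x + y) \<tau> \<subseteq> ?F"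
      by (auto simp: coface_vertices_def csupp_def)
    then show ?thesis
      using bd_eq_sum_superset[OF F(1) _ F(2) False, of "x + y"]
        bd_eq_sum_superset[OF F(1) _ F(2) False, of x]
        bd_eq_sum_superset[OF F(1) _ F(2) False, of y]
      by (simp add: alt_sign_add sum.distrib)
  qed simp
qed

lemma bd_uminus [simp]: "bd (- x) = - bd x"
  by (rule ext) (simp add: bd_eq_sum alt_sign_minus sum_negf coface_vertices_def)

lemma bd_zero [simp]: "bd 0 = 0"
  by (rule ext) (simp add: bd_eq_sum coface_vertices_def csupp_def)

lemma finite_csupp_bd:
  assumes "finite (csupp c)" "\<forall>\<sigma>\<in>csupp c. finite \<sigma>"
  shows "finite (csupp (bd c))"
proof (rule finite_subset)
  show "csupp (bd c) \<subseteq> (\<Union>\<sigma>\<in>csupp c. (\<lambda>v. \<sigma> - {v}) ` \<sigma>)"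
  proof
    fix \<tau> assume "\<tau> \<in> csupp (bd c)"
    then obtain v where "v \<notin> \<tau>" "insert v \<tau> \<in> csupp c"
      using csupp_bd by blast
    then show "\<tau> \<in> (\<Union>\<sigma>\<in>csupp c. (\<lambda>v. \<sigma> - {v}) ` \<sigma>)"
      by (intro UN_I[of "insert v \<tau>"] image_eqI[of _ _ v]) auto
  qed
qed (use assms in simp)

lemma count_below_insert_less:
  assumes "finite \<rho>" "v < w" "v \<notin> \<rho>"
  shows "count_below (insert v \<rho>) w = Suc (count_below \<rho> w)"
proof -
  have "{u\<in>insert v \<rho>. u < w} = insert v {u\<in>\<rho>. u < w}"
    using assms(2) by auto
  then show ?thesis
    using assms by (simp add: count_below_def)
qed

lemma count_below_insert_greater:
  assumes "w < v"
  shows "count_below (insert v \<rho>) w = count_below \<rho> w"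
proof -
  have "{u\<in>insert v \<rho>. u < w} = {u\<in>\<rho>. u < w}"
    using assms by auto
  then show ?thesis
    by (simp add: count_below_def)
qed

lemma sum_offdiagonal_antisym:
  fixes f :: "'a::linorder \<Rightarrow> 'a \<Rightarrow> 'g::ab_group_add"
  assumes "finite F" and antisym: "\<And>v w. v \<in> F \<Longrightarrow> w \<in> F \<Longrightarrow> w < v \<Longrightarrow> f v w = - f w v"
  shows "(\<Sum>v\<in>F. \<Sum>w\<in>F - {v}. f v w) = 0"
proof -
  let ?upper = "\<lambda>v w. if v < w then f v w else 0" and ?lower = "\<lambda>v w. if w < v then f v w else 0"
  have "(\<Sum>w\<in>F - {v}. f v w) = (\<Sum>w\<in>F. ?upper v w + ?lower v w)" if "v \<in> F" for v
  proof -
    have "(\<Sum>w\<in>F - {v}. f v w) = (\<Sum>w\<in>F - {v}. ?upper v w + ?lower v w)"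
      by (intro sum.cong) auto
    also have "\<dots> = (\<Sum>w\<in>F. ?upper v w + ?lower v w)"
      using assms(1) that by (intro sum.mono_neutral_left) auto
    finally show ?thesis .
  qed
  then have "(\<Sum>v\<in>F. \<Sum>w\<in>F - {v}. f v w)
      = (\<Sum>v\<in>F. \<Sum>w\<in>F. ?upper v w) + (\<Sum>v\<in>F. \<Sum>w\<in>F. ?lower v w)"
    by (simp add: sum.distrib)
  also have "(\<Sum>v\<in>F. \<Sum>w\<in>F. ?lower v w) = (\<Sum>w\<in>F. \<Sum>v\<in>F. ?lower v w)"
    by (rule sum.swap)
  also have "\<dots> = (\<Sum>w\<in>F. \<Sum>v\<in>F. - ?upper w v)"
  proof (intro sum.cong refl)
    fix w v assume "w \<in> F" "v \<in> F"
    then show "?lower v w = - ?upper w v"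
      using antisym[of v w] by simp
  qed
  also have "\<dots> = - (\<Sum>w\<in>F. \<Sum>v\<in>F. ?upper w v)"
    by (simp add: sum_negf)
  finally show ?thesis
    by simp
qed

text \<open>Every codimension-two face \<open>\<rho>\<close> of a simplex arises from it by deleting two vertices
  \<open>v < w\<close> in either order, and the two orders contribute with opposite signs.\<close>

lemma bd_bd:
  assumes "finite (csupp c)" "\<forall>\<sigma>\<in>csupp c. finite \<sigma>"
  shows "bd (bd c) = 0"
proof
  fix \<rho>
  show "bd (bd c) \<rho> = 0 \<rho>"
  proof (cases "\<rho> \<noteq> {} \<and> finite \<rho>")
    case False
    then consider "\<rho> = {}" | "infinite \<rho>"
      by blast
    then show ?thesis
    proof cases
      case 2
      have "bd c (insert v \<rho>) = 0" for v
      proof (rule ccontr)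
        assume "bd c (insert v \<rho>) \<noteq> 0"
        then obtain w where "insert w (insert v \<rho>) \<in> csupp c"
          using bd_nonzero_imp_coface by blast
        with assms(2) 2 show False
          by (metis finite_insert)
      qed
      then have "coface_vertices (bd c) \<rho> = {}"
        by (simp add: coface_vertices_def csupp_def)
      then show ?thesis
        by (simp add: bd_eq_sum[of "bd c" \<rho>])
    qed simp
  next
    case True
    define F where "F = \<Union>(csupp c) - \<rho>"
    define f where "f v w = alt_sign (count_below \<rho> v + count_below (insert v \<rho>) w)
        (c (insert w (insert v \<rho>)))" for v w
    have F: "finite F" "F \<inter> \<rho> = {}"
      using assms by (auto simp: F_def)
    have "coface_vertices (bd c) \<rho> \<subseteq> F"
    proof
      fix v assume "v \<in> coface_vertices (bd c) \<rho>"
      then have "v \<notin> \<rho>" "bd c (insert v \<rho>) \<noteq> 0"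
        by (auto simp: coface_vertices_def csupp_def)
      then obtain w where "insert w (insert v \<rho>) \<in> csupp c"
        using bd_nonzero_imp_coface by blast
      with \<open>v \<notin> \<rho>\<close> show "v \<in> F"
        unfolding F_def by blast
    qed
    then have "bd (bd c) \<rho> = (\<Sum>v\<in>F. alt_sign (count_below \<rho> v) (bd c (insert v \<rho>)))"
      using F True by (intro bd_eq_sum_superset) auto
    also have "\<dots> = (\<Sum>v\<in>F. \<Sum>w\<in>F - {v}. f v w)"
    proof (intro sum.cong refl)
      fix v assume "v \<in> F"
      have "coface_vertices c (insert v \<rho>) \<subseteq> F - {v}"
        by (auto simp: coface_vertices_def F_def)
      then have "bd c (insert v \<rho>)
          = (\<Sum>w\<in>F - {v}. alt_sign (count_below (insert v \<rho>) w) (c (insert w (insert v \<rho>))))"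
        using F by (intro bd_eq_sum_superset) auto
      then show "alt_sign (count_below \<rho> v) (bd c (insert v \<rho>)) = (\<Sum>w\<in>F - {v}. f v w)"
        using F by (simp add: alt_sign_sum alt_sign_alt_sign f_def)
    qed
    also have "\<dots> = 0"
    proof (rule sum_offdiagonal_antisym[OF F(1)])
      fix v w assume "v \<in> F" "w \<in> F" "w < v"
      then have "count_below (insert w \<rho>) v = Suc (count_below \<rho> v)"
        "count_below (insert v \<rho>) w = count_below \<rho> w"
        using F True count_below_insert_less[of \<rho> w v] count_below_insert_greater[of w v \<rho>]
        by auto
      moreover have "insert w (insert v \<rho>) = insert v (insert w \<rho>)"
        by auto
      ultimately show "f v w = - f w v"
        by (simp add: f_def alt_sign_def)
    qed
    finally show ?thesis
      by simp
  qed
qed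

section \<open>Chain groups\<close>

definition fin_chains :: "('v set \<Rightarrow> 'g::ab_group_add) set" where
  "fin_chains = {c. finite (csupp c) \<and> (\<forall>\<sigma>\<in>csupp c. finite \<sigma>)}"

lemma fin_chains_zero [simp]: "0 \<in> fin_chains"
  by (simp add: fin_chains_def csupp_def)

lemma fin_chains_add [simp]: "x \<in> fin_chains \<Longrightarrow> y \<in> fin_chains \<Longrightarrow> x + y \<in> fin_chains"
  using csupp_add[of x y] unfolding fin_chains_def by (auto intro: finite_subset)

lemma fin_chains_uminus [simp]: "x \<in> fin_chains \<Longrightarrow> - x \<in> fin_chains"
  by (simp add: fin_chains_def)

lemma fin_chains_diff [simp]: "x \<in> fin_chains \<Longrightarrow> y \<in> fin_chains \<Longrightarrow> x - y \<in> fin_chains"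
  using fin_chains_add[of x "- y"] by simp

lemma fin_chains_bd [simp]:
  assumes "x \<in> fin_chains"
  shows "bd x \<in> fin_chains"
proof -
  have "finite \<tau>" if \<tau>: "\<tau> \<in> csupp (bd x)" for \<tau>
  proof -
    obtain v where "insert v \<tau> \<in> csupp x"
      using csupp_bd[of x] \<tau> by blast
    then show ?thesis
      using assms by (auto simp: fin_chains_def)
  qed
  then show ?thesis
    using assms finite_csupp_bd by (auto simp: fin_chains_def)
qed

lemma bd_add_fin_chains [simp]: "x \<in> fin_chains \<Longrightarrow> y \<in> fin_chains \<Longrightarrow> bd (x + y) = bd x + bd y"
  by (rule bd_add) (auto simp: fin_chains_def)

lemma bd_diff_fin_chains [simp]: "x \<in> fin_chains \<Longrightarrow> y \<in> fin_chains \<Longrightarrow> bd (x - y) = bd x - bd y"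
  using bd_add_fin_chains[of x "- y"] by simp

lemma bd_bd_fin_chains [simp]: "x \<in> fin_chains \<Longrightarrow> bd (bd x) = 0"
  by (rule bd_bd) (auto simp: fin_chains_def)

lemma Gchains_fin_chains: "c \<in> Gchains Q n \<Longrightarrow> c \<in> fin_chains"
  by (auto simp: Gchains_def fin_chains_def)

lemma Gchains_zero [simp]: "0 \<in> Gchains Q n"
  by (simp add: Gchains_def csupp_def)

lemma Gchains_add:
  "x \<in> Gchains Q n \<Longrightarrow> y \<in> Gchains Q n \<Longrightarrow> x + (y :: 'v set \<Rightarrow> 'g::ab_group_add) \<in> Gchains Q n"
  using csupp_add[of x y] unfolding Gchains_def by (auto intro: finite_subset)

lemma Gchains_uminus: "x \<in> Gchains Q n \<Longrightarrow> - (x :: 'v set \<Rightarrow> 'g::ab_group_add) \<in> Gchains Q n"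
  by (simp add: Gchains_def)

lemma Gchains_mono: "Q \<subseteq> Y \<Longrightarrow> Gchains Q n \<subseteq> Gchains Y n"
  by (auto simp: Gchains_def)

lemma Gchains_Int: "Gchains (Q \<inter> Y) n = Gchains Q n \<inter> Gchains Y n"
  by (auto simp: Gchains_def)

lemma bd_in_Gchains:
  assumes c: "c \<in> Gchains Q n" and "csupp (bd c) \<subseteq> Y"
  shows "bd c \<in> Gchains Y (n - 1)"
proof -
  have "\<tau> \<in> Y \<and> finite \<tau> \<and> \<tau> \<noteq> {} \<and> int (card \<tau>) = n - 1 + 1" if \<tau>: "\<tau> \<in> csupp (bd c)" for \<tau>
  proof -
    obtain v where v: "\<tau> \<noteq> {}" "v \<notin> \<tau>" "insert v \<tau> \<in> csupp c"
      using csupp_bd \<tau> by blast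
    then have "finite (insert v \<tau>)" "int (card (insert v \<tau>)) = n + 1"
      using c by (auto simp: Gchains_def)
    then show ?thesis
      using v assms(2) \<tau> by auto
  qed
  moreover have "bd c \<in> fin_chains"
    using Gchains_fin_chains[OF c] by simp
  ultimately show ?thesis
    by (auto simp: Gchains_def fin_chains_def)
qed

lemma inf_chains_fin_chains: "c \<in> inf_chains Q n \<Longrightarrow> c \<in> fin_chains"
  by (auto simp: inf_chains_def intro: Gchains_fin_chains)

lemma inf_chains_zero [simp]: "0 \<in> inf_chains Q n"
  by (simp add: inf_chains_def)

lemma inf_chains_add:
  assumes "x \<in> inf_chains Q n" "y \<in> inf_chains Q n"
  shows "x + y \<in> inf_chains Q n"
  using assms inf_chains_fin_chains[OF assms(1)] inf_chains_fin_chains[OF assms(2)]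
  by (simp add: inf_chains_def Gchains_add)

lemma inf_chains_uminus: "x \<in> inf_chains Q n \<Longrightarrow> - x \<in> inf_chains Q n"
  by (simp add: inf_chains_def Gchains_uminus)

lemma inf_chains_diff: "x \<in> inf_chains Q n \<Longrightarrow> y \<in> inf_chains Q n \<Longrightarrow> x - y \<in> inf_chains Q n"
  using inf_chains_add[of x Q n "- y"] inf_chains_uminus[of y] by simp

lemma inf_chains_mono: "Q \<subseteq> Y \<Longrightarrow> inf_chains Q n \<subseteq> inf_chains Y n"
  using Gchains_mono[of Q Y] by (fastforce simp: inf_chains_def)

lemma inf_chains_Int: "inf_chains (Q \<inter> Y) n = inf_chains Q n \<inter> inf_chains Y n"
  by (auto simp: inf_chains_def Gchains_Int)

lemma bd_in_inf_chains: "c \<in> inf_chains Q n \<Longrightarrow> bd c \<in> inf_chains Q (n - 1)"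
  using inf_chains_fin_chains[of c] by (simp add: inf_chains_def)

section \<open>Relative homology classes\<close>

definition is_add_subgroup :: "'a::ab_group_add set \<Rightarrow> bool" where
  "is_add_subgroup T \<longleftrightarrow> 0 \<in> T \<and> (\<forall>x\<in>T. \<forall>y\<in>T. x + y \<in> T) \<and> (\<forall>x\<in>T. - x \<in> T)"

definition add_coset :: "'a::ab_group_add set \<Rightarrow> 'a \<Rightarrow> 'a set" where
  "add_coset T c = (\<lambda>h. h + c) ` T"

lemma is_add_subgroupI:
  assumes "0 \<in> T" "\<And>x y. x \<in> T \<Longrightarrow> y \<in> T \<Longrightarrow> x + y \<in> T" "\<And>x. x \<in> T \<Longrightarrow> - x \<in> T"
  shows "is_add_subgroup T"
  using assms by (simp add: is_add_subgroup_def)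

lemma is_add_subgroup_diff: "is_add_subgroup T \<Longrightarrow> x \<in> T \<Longrightarrow> y \<in> T \<Longrightarrow> x - y \<in> T"
  unfolding is_add_subgroup_def by (metis diff_conv_add_uminus)

lemma add_coset_eq_iff:
  assumes T: "is_add_subgroup T"
  shows "add_coset T c = add_coset T d \<longleftrightarrow> c - d \<in> T"
proof
  assume "add_coset T c = add_coset T d"
  moreover have "c \<in> add_coset T c"
    using T unfolding add_coset_def is_add_subgroup_def by force
  ultimately obtain h where "h \<in> T" "c = h + d"
    unfolding add_coset_def by auto
  then show "c - d \<in> T"
    by simp
next
  assume cd: "c - d \<in> T"
  have "h + (c - d) \<in> T" "h - (c - d) \<in> T" if "h \<in> T" for h
    using T cd that by (auto simp: is_add_subgroup_def is_add_subgroup_diff)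
  then show "add_coset T c = add_coset T d"
    unfolding add_coset_def by (force simp: algebra_simps intro: image_eqI)
qed

lemma add_coset_self: "is_add_subgroup T \<Longrightarrow> c \<in> add_coset T c"
  unfolding add_coset_def is_add_subgroup_def by force

lemma add_coset_eq_self_iff: "is_add_subgroup T \<Longrightarrow> add_coset T c = T \<longleftrightarrow> c \<in> T"
  using add_coset_eq_iff[of T c 0] by (simp add: add_coset_def is_add_subgroup_def)

lemma set_mult_add_coset:
  assumes T: "is_add_subgroup T"
  shows "set_mult (chain_monoid S) (add_coset T c) (add_coset T d) = add_coset T (c + d)"
proof -
  have "set_mult (chain_monoid S) (add_coset T c) (add_coset T d)
      = {(h + c) + (k + d) |h k. h \<in> T \<and> k \<in> T}"
    by (auto simp: set_mult_def chain_monoid_def cadd_eq_plus add_coset_def)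
  also have "\<dots> = {(h + k) + (c + d) |h k. h \<in> T \<and> k \<in> T}"
    by (simp add: algebra_simps)
  also have "\<dots> = add_coset T (c + d)"
    using T unfolding add_coset_def is_add_subgroup_def by force
  finally show ?thesis .
qed

lemma mem_rel_bounds:
  "x \<in> rel_bounds B A n \<longleftrightarrow> (\<exists>d a. d \<in> inf_chains B (n + 1) \<and> a \<in> inf_chains A n \<and> x = bd d + a)"
  unfolding rel_bounds_def cadd_eq_plus by blast

lemma mem_rel_cycles: "x \<in> rel_cycles B A n \<longleftrightarrow> x \<in> inf_chains B n \<and> bd x \<in> inf_chains A (n - 1)"
  unfolding rel_cycles_def by blast

lemma is_add_subgroup_rel_bounds:
  "is_add_subgroup (rel_bounds B A n :: ('v::linorder set \<Rightarrow> 'g::ab_group_add) set)"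
proof (rule is_add_subgroupI)
  show "0 \<in> rel_bounds B A n"
    unfolding mem_rel_bounds by (intro exI[of _ 0]) simp
next
  fix x y :: "'v set \<Rightarrow> 'g" assume "x \<in> rel_bounds B A n" "y \<in> rel_bounds B A n"
  then obtain d a d' a' where "d \<in> inf_chains B (n + 1)" "a \<in> inf_chains A n" "x = bd d + a"
    "d' \<in> inf_chains B (n + 1)" "a' \<in> inf_chains A n" "y = bd d' + a'"
    unfolding mem_rel_bounds by blast
  then show "x + y \<in> rel_bounds B A n"
    unfolding mem_rel_bounds
    by (intro exI[of _ "d + d'"] exI[of _ "a + a'"])
      (simp add: inf_chains_add inf_chains_fin_chains algebra_simps)
next
  fix x :: "'v set \<Rightarrow> 'g" assume "x \<in> rel_bounds B A n"
  then obtain d a where "d \<in> inf_chains B (n + 1)" "a \<in> inf_chains A n" "x = bd d + a"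
    unfolding mem_rel_bounds by blast
  then show "- x \<in> rel_bounds B A n"
    unfolding mem_rel_bounds
    by (intro exI[of _ "- d"] exI[of _ "- a"]) (simp add: inf_chains_uminus)
qed

lemma is_add_subgroup_rel_cycles:
  "is_add_subgroup (rel_cycles B A n :: ('v::linorder set \<Rightarrow> 'g::ab_group_add) set)"
  by (rule is_add_subgroupI)
    (auto simp: mem_rel_cycles inf_chains_add inf_chains_uminus inf_chains_fin_chains)

lemma zero_rel_bounds [simp]: "0 \<in> rel_bounds B A n"
  using is_add_subgroup_rel_bounds[of B A n] by (auto simp: is_add_subgroup_def)

lemma rel_cycles_add: "x \<in> rel_cycles B A n \<Longrightarrow> y \<in> rel_cycles B A n \<Longrightarrow> x + y \<in> rel_cycles B A n"
  using is_add_subgroup_rel_cycles[of B A n] by (auto simp: is_add_subgroup_def)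

lemma rel_cycles_diff: "x \<in> rel_cycles B A n \<Longrightarrow> y \<in> rel_cycles B A n \<Longrightarrow> x - y \<in> rel_cycles B A n"
  using is_add_subgroup_rel_cycles[of B A n] by (rule is_add_subgroup_diff)

lemma rel_bounds_mono: "B \<subseteq> B' \<Longrightarrow> A \<subseteq> A' \<Longrightarrow> rel_bounds B A n \<subseteq> rel_bounds B' A' n"
  unfolding rel_bounds_def using inf_chains_mono by blast

lemma rel_cycles_mono: "B \<subseteq> B' \<Longrightarrow> A \<subseteq> A' \<Longrightarrow> rel_cycles B A n \<subseteq> rel_cycles B' A' n"
  unfolding rel_cycles_def using inf_chains_mono by blast

abbreviation hclass :: "'v::linorder set set \<Rightarrow> 'v set set \<Rightarrow> int \<Rightarrow> ('v set \<Rightarrow> 'g::ab_group_add)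
    \<Rightarrow> ('v set \<Rightarrow> 'g) set" where
  "hclass B A n c \<equiv> add_coset (rel_bounds B A n) c"

lemma hclass_eq_iff: "hclass B A n c = hclass B A n d \<longleftrightarrow> c - d \<in> rel_bounds B A n"
  by (rule add_coset_eq_iff[OF is_add_subgroup_rel_bounds])

lemma carrier_rel_homology: "carrier (rel_homology B A n) = hclass B A n ` rel_cycles B A n"
  by (auto simp: rel_homology_def FactGroup_def RCOSETS_def r_coset_def chain_monoid_def
      cadd_eq_plus add_coset_def)

lemma one_rel_homology: "one (rel_homology B A n) = rel_bounds B A n"
  by (simp add: rel_homology_def FactGroup_def)

lemma hclass_eq_one_iff: "hclass B A n c = one (rel_homology B A n) \<longleftrightarrow> c \<in> rel_bounds B A n"
  by (simp add: one_rel_homology add_coset_eq_self_iff[OF is_add_subgroup_rel_bounds])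

lemma mult_rel_homology:
  "hclass B A n c \<otimes>\<^bsub>rel_homology B A n\<^esub> hclass B A n d = hclass B A n (c + d)"
  unfolding rel_homology_def FactGroup_def monoid.simps
  by (rule set_mult_add_coset[OF is_add_subgroup_rel_bounds])

lemma inv_rel_homology:
  assumes "c \<in> rel_cycles B A n"
  shows "inv\<^bsub>rel_homology B A n\<^esub> hclass B A n c = hclass B A n (- c)"
  unfolding m_inv_def
proof (rule the_equality)
  have "- c \<in> rel_cycles B A n"
    using assms is_add_subgroup_rel_cycles[of B A n] by (auto simp: is_add_subgroup_def)
  then show "hclass B A n (- c) \<in> carrier (rel_homology B A n)
      \<and> hclass B A n c \<otimes>\<^bsub>rel_homology B A n\<^esub> hclass B A n (- c) = one (rel_homology B A n)
      \<and> hclass B A n (- c) \<otimes>\<^bsub>rel_homology B A n\<^esub> hclass B A n c = one (rel_homology B A n)"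
    by (simp add: carrier_rel_homology mult_rel_homology hclass_eq_one_iff)
next
  fix y assume y: "y \<in> carrier (rel_homology B A n)
      \<and> hclass B A n c \<otimes>\<^bsub>rel_homology B A n\<^esub> y = one (rel_homology B A n)
      \<and> y \<otimes>\<^bsub>rel_homology B A n\<^esub> hclass B A n c = one (rel_homology B A n)"
  then obtain d where d: "y = hclass B A n d"
    by (auto simp: carrier_rel_homology)
  then have "d - (- c) \<in> rel_bounds B A n"
    using y by (simp add: mult_rel_homology hclass_eq_one_iff add.commute)
  then show "y = hclass B A n (- c)"
    using d hclass_eq_iff by blast
qed

lemma induced_hclass:
  assumes "B \<subseteq> B'" "A \<subseteq> A'"
  shows "induced B' A' n (hclass B A n c) = hclass B' A' n c"
proof -
  have "\<exists>c0. c0 \<in> hclass B A n c"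
    using add_coset_self[OF is_add_subgroup_rel_bounds] by blast
  then have "(SOME c0. c0 \<in> hclass B A n c) \<in> hclass B A n c"
    by (rule someI_ex)
  then obtain h where h: "h \<in> rel_bounds B A n" "(SOME c0. c0 \<in> hclass B A n c) = h + c"
    by (auto simp: add_coset_def)
  then have "hclass B' A' n (h + c) = hclass B' A' n c"
    using rel_bounds_mono[OF assms] by (auto simp: hclass_eq_iff)
  then show ?thesis
    using h by (simp add: induced_def add_coset_def cadd_eq_plus)
qed

section \<open>Splitting chains over a union\<close>

definition intersection_compatible :: "'v set set \<Rightarrow> 'v set set \<Rightarrow> bool" where
  "intersection_compatible Q Y \<longleftrightarrow> (\<forall>\<sigma>\<in>Q. \<forall>\<sigma>'\<in>Y. \<sigma> \<inter> \<sigma>' = {} \<or> \<sigma> \<inter> \<sigma>' \<in> Q \<inter> Y)"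

definition face_closed :: "'v set set \<Rightarrow> bool" where
  "face_closed K \<longleftrightarrow> (\<forall>\<sigma>\<in>K. \<forall>\<tau>. \<tau> \<noteq> {} \<and> \<tau> \<subseteq> \<sigma> \<longrightarrow> \<tau> \<in> K)"

lemma face_closed_lower_cplx: "face_closed (lower_cplx K)"
  by (auto simp: face_closed_def lower_cplx_def)

lemma face_closed_assoc_cplx: "face_closed (assoc_cplx K)"
  unfolding face_closed_def assoc_cplx_def by (blast intro: subset_trans)

lemma face_closed_imp_intersection_compatible:
  "face_closed Q \<Longrightarrow> face_closed Y \<Longrightarrow> intersection_compatible Q Y"
  unfolding face_closed_def intersection_compatible_def by (meson Int_lower1 Int_lower2 IntI)

lemma inf_chains_restrict:
  assumes "c \<in> Gchains K n" "csupp c \<subseteq> Q" "csupp (bd c) \<subseteq> Q"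
  shows "c \<in> inf_chains Q n"
proof -
  have "c \<in> Gchains Q n"
    using assms(1,2) by (auto simp: Gchains_def)
  then show ?thesis
    using bd_in_Gchains assms(3) by (simp add: inf_chains_def)
qed

text \<open>Split \<open>c\<close> into its part \<open>c\<^sub>1\<close> on \<open>Q\<close> and the rest \<open>c\<^sub>2\<close> on \<open>Y - Q\<close>. A face
  \<open>\<tau>\<close> of an \<open>n\<close>-simplex in \<open>Q\<close> lying outside \<open>Q\<close> can carry a nonzero coefficient of
  \<open>bd c\<^sub>1\<close> only if it is cancelled by \<open>bd c\<^sub>2\<close> or lies in \<open>Y\<close>; either way \<open>\<tau>\<close> is the
  intersection of a simplex of \<open>Q\<close> with one of \<open>Y\<close>, so it lies in \<open>Q\<close> after all.\<close>

lemma inf_chains_Un_split: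
  assumes compat: "intersection_compatible Q Y" and c: "c \<in> inf_chains (Q \<union> Y) n"
  obtains x y where "x \<in> inf_chains Q n" "y \<in> inf_chains Y n" "c = x + y"
proof -
  define c1 where "c1 = (\<lambda>\<sigma>. if \<sigma> \<in> Q then c \<sigma> else 0)"
  define c2 where "c2 = (\<lambda>\<sigma>. if \<sigma> \<in> Q then 0 else c \<sigma>)"
  have cG: "c \<in> Gchains (Q \<union> Y) n" and bdG: "bd c \<in> Gchains (Q \<union> Y) (n - 1)"
    using c by (auto simp: inf_chains_def)
  have supp: "csupp c1 \<subseteq> Q \<inter> csupp c" "csupp c2 \<subseteq> Y \<inter> csupp c"
    using cG by (auto simp: c1_def c2_def csupp_def Gchains_def)
  have G: "c1 \<in> Gchains (Q \<union> Y) n" "c2 \<in> Gchains (Q \<union> Y) n"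
    using cG supp by (auto simp: Gchains_def intro: finite_subset)
  have sum: "c = c1 + c2"
    by (simp add: c1_def c2_def fun_eq_iff)
  then have bd_sum: "bd c \<tau> = bd c1 \<tau> + bd c2 \<tau>" for \<tau>
    using G by (simp add: Gchains_fin_chains)
  have meet: "\<tau> \<in> Q \<inter> Y" if "\<sigma> \<in> Q" "\<sigma>' \<in> Y" "\<sigma> \<inter> \<sigma>' = \<tau>" "\<tau> \<noteq> {}" for \<sigma> \<sigma>' \<tau>
    using compat that unfolding intersection_compatible_def by blast
  have face1: "\<exists>v. v \<notin> \<tau> \<and> insert v \<tau> \<in> Q" and face2: "\<exists>u. u \<notin> \<tau> \<and> insert u \<tau> \<in> Y - Q"
    if "bd c1 \<tau> \<noteq> 0" "bd c2 \<tau> \<noteq> 0" for \<tau>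
    using bd_nonzero_imp_coface[OF that(1)] bd_nonzero_imp_coface[OF that(2)] supp
    by (auto simp: c2_def csupp_def)
  have common: "\<tau> \<in> Q \<inter> Y" if \<tau>: "bd c1 \<tau> \<noteq> 0" "bd c2 \<tau> \<noteq> 0" for \<tau>
  proof -
    obtain v u where "v \<notin> \<tau>" "insert v \<tau> \<in> Q" "u \<notin> \<tau>" "insert u \<tau> \<in> Y - Q"
      using face1[OF \<tau>] face2[OF \<tau>] by blast
    moreover from this have "insert v \<tau> \<inter> insert u \<tau> = \<tau>"
      by auto
    moreover have "\<tau> \<noteq> {}"
      using \<tau> bd_empty by metis
    ultimately show ?thesis
      using meet by blast
  qed
  have "c1 \<in> inf_chains Q n"
  proof (rule inf_chains_restrict[OF G(1)])
    show "csupp c1 \<subseteq> Q"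
      using supp by blast
    show "csupp (bd c1) \<subseteq> Q"
    proof
      fix \<tau> assume "\<tau> \<in> csupp (bd c1)"
      then have \<tau>: "bd c1 \<tau> \<noteq> 0"
        by (simp add: csupp_def)
      show "\<tau> \<in> Q"
      proof (cases "bd c2 \<tau> = 0")
        case True
        then have "\<tau> \<in> Q \<union> Y"
          using bdG \<tau> bd_sum by (auto simp: Gchains_def csupp_def)
        moreover obtain v where "\<tau> \<noteq> {}" "v \<notin> \<tau>" "insert v \<tau> \<in> csupp c1"
          using bd_nonzero_imp_coface[OF \<tau>] by blast
        moreover from this have "insert v \<tau> \<in> Q" "insert v \<tau> \<inter> \<tau> = \<tau>"
          using supp by auto
        ultimately show ?thesis
          using meet by blast
      qed (use common \<tau> in blast)
    qed
  qed
  moreover have "c2 \<in> inf_chains Y n"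
  proof (rule inf_chains_restrict[OF G(2)])
    show "csupp c2 \<subseteq> Y"
      using supp by blast
    show "csupp (bd c2) \<subseteq> Y"
    proof
      fix \<tau> assume "\<tau> \<in> csupp (bd c2)"
      then have \<tau>: "bd c2 \<tau> \<noteq> 0"
        by (simp add: csupp_def)
      show "\<tau> \<in> Y"
      proof (cases "bd c1 \<tau> = 0")
        case True
        then have "\<tau> \<in> Q \<union> Y"
          using bdG \<tau> bd_sum by (auto simp: Gchains_def csupp_def)
        moreover obtain u where "\<tau> \<noteq> {}" "u \<notin> \<tau>" "insert u \<tau> \<in> csupp c2"
          using bd_nonzero_imp_coface[OF \<tau>] by blast
        moreover from this have "insert u \<tau> \<in> Y" "\<tau> \<inter> insert u \<tau> = \<tau>"
          using supp by auto
        ultimately show ?thesis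
          using meet by blast
      qed (use common \<tau> in blast)
    qed
  qed
  ultimately show ?thesis
    using sum that by blast
qed

section \<open>The Mayer--Vietoris sequence of two pairs\<close>

locale mayer_vietoris =
  fixes B1 A1 B2 A2 :: "'v::linorder set set"
  assumes A1_subset_B1: "A1 \<subseteq> B1" and A2_subset_B2: "A2 \<subseteq> B2"
    and compatible_B: "intersection_compatible B1 B2"
    and compatible_A: "intersection_compatible A1 A2"
begin

abbreviation H_Int :: "int \<Rightarrow> ('v set \<Rightarrow> 'g::ab_group_add) set monoid" where
  "H_Int n \<equiv> rel_homology (B1 \<inter> B2) (A1 \<inter> A2) n"

abbreviation H_sum :: "int \<Rightarrow> (('v set \<Rightarrow> 'g::ab_group_add) set \<times> ('v set \<Rightarrow> 'g) set) monoid" where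
  "H_sum n \<equiv> rel_homology B1 A1 n \<times>\<times> rel_homology B2 A2 n"

abbreviation H_Un :: "int \<Rightarrow> ('v set \<Rightarrow> 'g::ab_group_add) set monoid" where
  "H_Un n \<equiv> rel_homology (B1 \<union> B2) (A1 \<union> A2) n"

text \<open>A cycle \<open>z\<close> of \<open>(B1 \<union> B2, A1 \<union> A2)\<close> split as \<open>z = x + y\<close> over \<open>B1\<close>, \<open>B2\<close> with
  \<open>bd z = a1 + a2\<close> split over \<open>A1\<close>, \<open>A2\<close>; then \<open>bd x - a1 = a2 - bd y\<close> is a relative
  cycle of the intersection, whose class is the image of \<open>[z]\<close> under the connecting map.\<close>

definition conn_split :: "int \<Rightarrow> ('v set \<Rightarrow> 'g::ab_group_add) \<Rightarrow> ('v set \<Rightarrow> 'g) \<Rightarrow> ('v set \<Rightarrow> 'g)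
    \<Rightarrow> ('v set \<Rightarrow> 'g) \<Rightarrow> ('v set \<Rightarrow> 'g) \<Rightarrow> bool" where
  "conn_split n z x y a1 a2 \<longleftrightarrow> x \<in> inf_chains B1 n \<and> y \<in> inf_chains B2 n \<and> z = x + y \<and>
     a1 \<in> inf_chains A1 (n - 1) \<and> a2 \<in> inf_chains A2 (n - 1) \<and> bd z = a1 + a2"

definition connecting_map :: "int \<Rightarrow> ('v set \<Rightarrow> 'g::ab_group_add) set \<Rightarrow> ('v set \<Rightarrow> 'g) set" where
  "connecting_map n Z = hclass (B1 \<inter> B2) (A1 \<inter> A2) (n - 1)
     (SOME w. \<exists>z x y a1 a2. z \<in> Z \<and> conn_split n z x y a1 a2 \<and> w = bd x - a1)"

lemma split_B:
  assumes "c \<in> inf_chains (B1 \<union> B2) n"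
  obtains x y where "x \<in> inf_chains B1 n" "y \<in> inf_chains B2 n" "c = x + y"
  using inf_chains_Un_split[OF compatible_B assms] by blast

lemma split_A:
  assumes "c \<in> inf_chains (A1 \<union> A2) n"
  obtains x y where "x \<in> inf_chains A1 n" "y \<in> inf_chains A2 n" "c = x + y"
  using inf_chains_Un_split[OF compatible_A assms] by blast

lemma inf_chains_A1_B1: "c \<in> inf_chains A1 n \<Longrightarrow> c \<in> inf_chains B1 n"
  using inf_chains_mono[OF A1_subset_B1] by blast

lemma inf_chains_A2_B2: "c \<in> inf_chains A2 n \<Longrightarrow> c \<in> inf_chains B2 n"
  using inf_chains_mono[OF A2_subset_B2] by blast

lemma rel_cycles_Int_1: "c \<in> rel_cycles (B1 \<inter> B2) (A1 \<inter> A2) n \<Longrightarrow> c \<in> rel_cycles B1 A1 n"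
  and rel_cycles_Int_2: "c \<in> rel_cycles (B1 \<inter> B2) (A1 \<inter> A2) n \<Longrightarrow> c \<in> rel_cycles B2 A2 n"
  and rel_cycles_Un_1: "c \<in> rel_cycles B1 A1 n \<Longrightarrow> c \<in> rel_cycles (B1 \<union> B2) (A1 \<union> A2) n"
  and rel_cycles_Un_2: "c \<in> rel_cycles B2 A2 n \<Longrightarrow> c \<in> rel_cycles (B1 \<union> B2) (A1 \<union> A2) n"
  using rel_cycles_mono[of _ _ _ _ n] by (meson Int_lower1 Int_lower2 Un_upper1 Un_upper2 subsetD)+

lemma hclass_in_carrier: "c \<in> rel_cycles B A n \<Longrightarrow> hclass B A n c \<in> carrier (rel_homology B A n)"
  by (simp add: carrier_rel_homology)

lemma mv_f_hclass:
  "mv_f B1 A1 B2 A2 n (hclass (B1 \<inter> B2) (A1 \<inter> A2) n c) = (hclass B1 A1 n c, hclass B2 A2 n c)"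
  by (simp add: mv_f_def induced_hclass)

lemma mv_g_hclass:
  assumes "x \<in> rel_cycles B1 A1 n" "y \<in> rel_cycles B2 A2 n"
  shows "mv_g B1 A1 B2 A2 n (hclass B1 A1 n x, hclass B2 A2 n y)
     = hclass (B1 \<union> B2) (A1 \<union> A2) n (x - y)"
  using inv_rel_homology[OF rel_cycles_Un_2[OF assms(2)]]
  by (simp add: mv_g_def induced_hclass Un_mono mult_rel_homology)

lemma conn_split_exists:
  assumes "z \<in> rel_cycles (B1 \<union> B2) (A1 \<union> A2) n"
  obtains x y a1 a2 where "conn_split n z x y a1 a2"
proof -
  have z: "z \<in> inf_chains (B1 \<union> B2) n" "bd z \<in> inf_chains (A1 \<union> A2) (n - 1)"
    using assms by (simp_all add: mem_rel_cycles)
  obtain x y where "x \<in> inf_chains B1 n" "y \<in> inf_chains B2 n" "z = x + y"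
    using split_B[OF z(1)] .
  moreover obtain a1 a2 where "a1 \<in> inf_chains A1 (n - 1)" "a2 \<in> inf_chains A2 (n - 1)" "bd z = a1 + a2"
    using split_A[OF z(2)] .
  ultimately show ?thesis
    using that by (auto simp: conn_split_def)
qed

lemma conn_split_bd:
  assumes "conn_split n z x y a1 a2"
  shows "bd x + bd y = a1 + a2"
  using assms by (auto simp: conn_split_def inf_chains_fin_chains)

lemma conn_split_add:
  assumes "conn_split n z x y a1 a2" "conn_split n z' x' y' a1' a2'"
  shows "conn_split n (z + z') (x + x') (y + y') (a1 + a1') (a2 + a2')"
proof -
  have bz: "bd z = a1 + a2" "bd z' = a1' + a2'"
    using assms unfolding conn_split_def by blast+
  have "bd (z + z') = bd z + bd z'"
    using assms by (auto simp: conn_split_def inf_chains_fin_chains)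
  also have "\<dots> = (a1 + a1') + (a2 + a2')"
    unfolding bz by (simp add: algebra_simps)
  finally show ?thesis
    using assms by (auto simp: conn_split_def inf_chains_add algebra_simps)
qed

lemma conn_split_rel_cycle:
  assumes d: "conn_split n z x y a1 a2"
  shows "bd x - a1 \<in> rel_cycles (B1 \<inter> B2) (A1 \<inter> A2) (n - 1)"
proof -
  have x: "x \<in> inf_chains B1 n" and y: "y \<in> inf_chains B2 n"
    and a1: "a1 \<in> inf_chains A1 (n - 1)" and a2: "a2 \<in> inf_chains A2 (n - 1)"
    using d by (auto simp: conn_split_def)
  have eq: "bd x - a1 = a2 - bd y"
    using conn_split_bd[OF d] by (simp add: algebra_simps)
  have "bd x - a1 \<in> inf_chains B1 (n - 1)"
    using bd_in_inf_chains[OF x] inf_chains_A1_B1[OF a1] by (simp add: inf_chains_diff)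
  moreover have "a2 - bd y \<in> inf_chains B2 (n - 1)"
    using bd_in_inf_chains[OF y] inf_chains_A2_B2[OF a2] by (simp add: inf_chains_diff)
  moreover have "bd (bd x - a1) = - bd a1" "bd (a2 - bd y) = bd a2"
    using x y a1 a2 by (simp_all add: inf_chains_fin_chains)
  ultimately show ?thesis
    using eq bd_in_inf_chains[OF a1] bd_in_inf_chains[OF a2]
    by (simp add: mem_rel_cycles inf_chains_Int inf_chains_uminus)
qed

lemma conn_split_well_defined:
  assumes d: "conn_split n z x y a1 a2" and d': "conn_split n z' x' y' a1' a2'"
    and zz': "z - z' \<in> rel_bounds (B1 \<union> B2) (A1 \<union> A2) n"
  shows "(bd x - a1) - (bd x' - a1') \<in> rel_bounds (B1 \<inter> B2) (A1 \<inter> A2) (n - 1)"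
proof -
  obtain dd a where "dd \<in> inf_chains (B1 \<union> B2) (n + 1)" "a \<in> inf_chains (A1 \<union> A2) n"
    and zz'_eq: "z - z' = bd dd + a"
    using zz' mem_rel_bounds by blast
  then obtain d1 d2 e1 e2 where d12: "d1 \<in> inf_chains B1 (n + 1)" "d2 \<in> inf_chains B2 (n + 1)" "dd = d1 + d2"
    and e12: "e1 \<in> inf_chains A1 n" "e2 \<in> inf_chains A2 n" "a = e1 + e2"
    using split_A split_B by metis
  have x: "x \<in> inf_chains B1 n" "x' \<in> inf_chains B1 n" and y: "y \<in> inf_chains B2 n" "y' \<in> inf_chains B2 n"
    and a1: "a1 \<in> inf_chains A1 (n - 1)" "a1' \<in> inf_chains A1 (n - 1)"
    and a2: "a2 \<in> inf_chains A2 (n - 1)" "a2' \<in> inf_chains A2 (n - 1)"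
    and z: "z = x + y" "z' = x' + y'"
    using d d' by (auto simp: conn_split_def)
  have fin: "x \<in> fin_chains" "x' \<in> fin_chains" "y \<in> fin_chains" "y' \<in> fin_chains"
    "d1 \<in> fin_chains" "d2 \<in> fin_chains" "e1 \<in> fin_chains" "e2 \<in> fin_chains"
    using x y d12 e12 by (auto intro: inf_chains_fin_chains)
  define u where "u = x - x' - bd d1 - e1"
  have u_alt: "u = - (y - y' - bd d2 - e2)"
    using zz'_eq d12(3) e12(3) z fin unfolding u_def by (simp add: algebra_simps)
  have "u \<in> inf_chains B1 n"
    unfolding u_def using x bd_in_inf_chains[OF d12(1)] inf_chains_A1_B1[OF e12(1)]
    by (simp add: inf_chains_diff)
  moreover have "u \<in> inf_chains B2 n"
    unfolding u_alt using y bd_in_inf_chains[OF d12(2)] inf_chains_A2_B2[OF e12(2)]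
    by (simp add: inf_chains_diff inf_chains_uminus)
  ultimately have u: "u \<in> inf_chains (B1 \<inter> B2) (n - 1 + 1)"
    by (simp add: inf_chains_Int)
  define e where "e = (bd x - a1) - (bd x' - a1') - bd u"
  have "e = bd e1 - a1 + a1'"
    unfolding e_def u_def using fin by (simp add: algebra_simps)
  then have "e \<in> inf_chains A1 (n - 1)"
    using bd_in_inf_chains[OF e12(1)] a1 by (simp add: inf_chains_add inf_chains_diff)
  moreover have "e = (bd x + bd y) - (bd x' + bd y') - a1 + a1' - bd e2"
    unfolding e_def u_alt using fin by (simp add: algebra_simps)
  then have "e = a2 - a2' - bd e2"
    unfolding conn_split_bd[OF d] conn_split_bd[OF d'] by (simp add: algebra_simps)
  then have "e \<in> inf_chains A2 (n - 1)"
    using bd_in_inf_chains[OF e12(2)] a2 by (simp add: inf_chains_diff)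
  moreover have "(bd x - a1) - (bd x' - a1') = bd u + e"
    unfolding e_def by simp
  ultimately show ?thesis
    using u unfolding mem_rel_bounds inf_chains_Int by blast
qed

lemma connecting_map_hclass:
  assumes z: "z \<in> rel_cycles (B1 \<union> B2) (A1 \<union> A2) n" and d: "conn_split n z x y a1 a2"
  shows "connecting_map n (hclass (B1 \<union> B2) (A1 \<union> A2) n z)
       = hclass (B1 \<inter> B2) (A1 \<inter> A2) (n - 1) (bd x - a1)"
proof -
  let ?P = "\<lambda>w. \<exists>z' x y a1 a2. z' \<in> hclass (B1 \<union> B2) (A1 \<union> A2) n z
      \<and> conn_split n z' x y a1 a2 \<and> w = bd x - a1"
  have "\<exists>w. ?P w"
    using d add_coset_self[OF is_add_subgroup_rel_bounds] by blast
  then have "?P (SOME w. ?P w)"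
    by (rule someI_ex)
  then obtain z' x' y' a1' a2' where z': "z' \<in> hclass (B1 \<union> B2) (A1 \<union> A2) n z"
    and d': "conn_split n z' x' y' a1' a2'" and eq: "(SOME w. ?P w) = bd x' - a1'"
    by blast
  have "z' - z \<in> rel_bounds (B1 \<union> B2) (A1 \<union> A2) n"
    using z' by (auto simp: add_coset_def)
  then show ?thesis
    unfolding connecting_map_def eq hclass_eq_iff by (rule conn_split_well_defined[OF d' d])
qed

lemma mv_f_hom: "(mv_f B1 A1 B2 A2 n :: ('v set \<Rightarrow> 'g::ab_group_add) set \<Rightarrow> _) \<in> hom (H_Int n) (H_sum n)"
proof (rule homI)
  fix S :: "('v set \<Rightarrow> 'g) set" assume "S \<in> carrier (H_Int n)"
  then obtain c where "c \<in> rel_cycles (B1 \<inter> B2) (A1 \<inter> A2) n" "S = hclass (B1 \<inter> B2) (A1 \<inter> A2) n c"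
    by (auto simp: carrier_rel_homology)
  then show "mv_f B1 A1 B2 A2 n S \<in> carrier (H_sum n)"
    by (simp add: mv_f_hclass DirProd_def hclass_in_carrier rel_cycles_Int_1 rel_cycles_Int_2)
next
  fix S S' :: "('v set \<Rightarrow> 'g) set" assume "S \<in> carrier (H_Int n)" "S' \<in> carrier (H_Int n)"
  then show "mv_f B1 A1 B2 A2 n (S \<otimes>\<^bsub>H_Int n\<^esub> S') = mv_f B1 A1 B2 A2 n S \<otimes>\<^bsub>H_sum n\<^esub> mv_f B1 A1 B2 A2 n S'"
    by (auto simp: carrier_rel_homology mv_f_hclass DirProd_def mult_rel_homology)
qed

lemma mv_g_hom: "(mv_g B1 A1 B2 A2 n :: _ \<Rightarrow> ('v set \<Rightarrow> 'g::ab_group_add) set) \<in> hom (H_sum n) (H_Un n)"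
proof (rule homI)
  fix S :: "('v set \<Rightarrow> 'g) set \<times> ('v set \<Rightarrow> 'g) set" assume "S \<in> carrier (H_sum n)"
  then obtain x y where "x \<in> rel_cycles B1 A1 n" "y \<in> rel_cycles B2 A2 n"
    "S = (hclass B1 A1 n x, hclass B2 A2 n y)"
    by (auto simp: DirProd_def carrier_rel_homology)
  then show "mv_g B1 A1 B2 A2 n S \<in> carrier (H_Un n)"
    by (simp add: mv_g_hclass hclass_in_carrier rel_cycles_diff rel_cycles_Un_1 rel_cycles_Un_2)
next
  fix S S' :: "('v set \<Rightarrow> 'g) set \<times> ('v set \<Rightarrow> 'g) set" assume "S \<in> carrier (H_sum n)" "S' \<in> carrier (H_sum n)"
  then obtain x y x' y' where x: "x \<in> rel_cycles B1 A1 n" "x' \<in> rel_cycles B1 A1 n"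
    and y: "y \<in> rel_cycles B2 A2 n" "y' \<in> rel_cycles B2 A2 n"
    and XY: "S = (hclass B1 A1 n x, hclass B2 A2 n y)" "S' = (hclass B1 A1 n x', hclass B2 A2 n y')"
    by (auto simp: DirProd_def carrier_rel_homology)
  have "S \<otimes>\<^bsub>H_sum n\<^esub> S' = (hclass B1 A1 n (x + x'), hclass B2 A2 n (y + y'))"
    using XY by (simp add: DirProd_def mult_rel_homology)
  then show "mv_g B1 A1 B2 A2 n (S \<otimes>\<^bsub>H_sum n\<^esub> S') = mv_g B1 A1 B2 A2 n S \<otimes>\<^bsub>H_Un n\<^esub> mv_g B1 A1 B2 A2 n S'"
    using XY x y mv_g_hclass[OF rel_cycles_add rel_cycles_add, OF x y]
    by (simp add: mv_g_hclass mult_rel_homology algebra_simps)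
qed

lemma connecting_map_hom:
  "(connecting_map n :: ('v set \<Rightarrow> 'g::ab_group_add) set \<Rightarrow> _) \<in> hom (H_Un n) (H_Int (n - 1))"
proof (rule homI)
  fix Z :: "('v set \<Rightarrow> 'g) set" assume "Z \<in> carrier (H_Un n)"
  then obtain z where z: "z \<in> rel_cycles (B1 \<union> B2) (A1 \<union> A2) n" "Z = hclass (B1 \<union> B2) (A1 \<union> A2) n z"
    by (auto simp: carrier_rel_homology)
  obtain x y a1 a2 where d: "conn_split n z x y a1 a2"
    using conn_split_exists[OF z(1)] .
  show "connecting_map n Z \<in> carrier (H_Int (n - 1))"
    using z connecting_map_hclass[OF z(1) d] conn_split_rel_cycle[OF d] by (simp add: hclass_in_carrier)
next
  fix Z Z' :: "('v set \<Rightarrow> 'g) set" assume "Z \<in> carrier (H_Un n)" "Z' \<in> carrier (H_Un n)"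
  then obtain z z' where z: "z \<in> rel_cycles (B1 \<union> B2) (A1 \<union> A2) n" "Z = hclass (B1 \<union> B2) (A1 \<union> A2) n z"
    and z': "z' \<in> rel_cycles (B1 \<union> B2) (A1 \<union> A2) n" "Z' = hclass (B1 \<union> B2) (A1 \<union> A2) n z'"
    by (auto simp: carrier_rel_homology)
  obtain x y a1 a2 x' y' a1' a2' where d: "conn_split n z x y a1 a2" and d': "conn_split n z' x' y' a1' a2'"
    using conn_split_exists[OF z(1)] conn_split_exists[OF z'(1)] by metis
  have "x \<in> fin_chains" "x' \<in> fin_chains"
    using d d' by (auto simp: conn_split_def inf_chains_fin_chains)
  then show "connecting_map n (Z \<otimes>\<^bsub>H_Un n\<^esub> Z') = connecting_map n Z \<otimes>\<^bsub>H_Int (n - 1)\<^esub> connecting_map n Z'"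
    using z z' connecting_map_hclass[OF z(1) d] connecting_map_hclass[OF z'(1) d']
      connecting_map_hclass[OF rel_cycles_add[OF z(1) z'(1)] conn_split_add[OF d d']]
    by (simp add: mult_rel_homology algebra_simps)
qed

end

context mayer_vietoris
begin

lemma image_mv_f_subset_kernel:
  "(mv_f B1 A1 B2 A2 n :: ('v set \<Rightarrow> 'g::ab_group_add) set \<Rightarrow> _) ` carrier (H_Int n)
     \<subseteq> kernel (H_sum n) (H_Un n) (mv_g B1 A1 B2 A2 n)"
proof
  fix S :: "('v set \<Rightarrow> 'g) set \<times> ('v set \<Rightarrow> 'g) set"
  assume "S \<in> mv_f B1 A1 B2 A2 n ` carrier (H_Int n)"
  then obtain c where "c \<in> rel_cycles (B1 \<inter> B2) (A1 \<inter> A2) n"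
    "S = mv_f B1 A1 B2 A2 n (hclass (B1 \<inter> B2) (A1 \<inter> A2) n c)"
    by (auto simp: carrier_rel_homology)
  then show "S \<in> kernel (H_sum n) (H_Un n) (mv_g B1 A1 B2 A2 n)"
    by (simp add: kernel_def mv_f_hclass mv_g_hclass rel_cycles_Int_1 rel_cycles_Int_2 DirProd_def
        hclass_in_carrier hclass_eq_one_iff)
qed

text \<open>If \<open>x - y = bd (d1 + d2) + (a1 + a2)\<close> with the summands split over the two pairs, then
  \<open>x - bd d1 - a1 = y + bd d2 + a2\<close> is a relative cycle of the intersection.\<close>

lemma kernel_mv_g_subset_image:
  "kernel (H_sum n) (H_Un n) (mv_g B1 A1 B2 A2 n)
     \<subseteq> (mv_f B1 A1 B2 A2 n :: ('v set \<Rightarrow> 'g::ab_group_add) set \<Rightarrow> _) ` carrier (H_Int n)"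
proof
  fix S :: "('v set \<Rightarrow> 'g) set \<times> ('v set \<Rightarrow> 'g) set"
  assume S: "S \<in> kernel (H_sum n) (H_Un n) (mv_g B1 A1 B2 A2 n)"
  then obtain x y where x: "x \<in> rel_cycles B1 A1 n" and y: "y \<in> rel_cycles B2 A2 n"
    and S_eq: "S = (hclass B1 A1 n x, hclass B2 A2 n y)"
    by (auto simp: kernel_def DirProd_def carrier_rel_homology)
  have "x - y \<in> rel_bounds (B1 \<union> B2) (A1 \<union> A2) n"
    using S S_eq mv_g_hclass[OF x y] by (simp add: kernel_def hclass_eq_one_iff)
  then obtain dd a where "dd \<in> inf_chains (B1 \<union> B2) (n + 1)" "a \<in> inf_chains (A1 \<union> A2) n"
    and xy: "x - y = bd dd + a"
    unfolding mem_rel_bounds by blast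
  then obtain d1 d2 a1 a2 where d12: "d1 \<in> inf_chains B1 (n + 1)" "d2 \<in> inf_chains B2 (n + 1)" "dd = d1 + d2"
    and a12: "a1 \<in> inf_chains A1 n" "a2 \<in> inf_chains A2 n" "a = a1 + a2"
    using split_A split_B by metis
  have xI: "x \<in> inf_chains B1 n" "bd x \<in> inf_chains A1 (n - 1)"
    and yI: "y \<in> inf_chains B2 n" "bd y \<in> inf_chains A2 (n - 1)"
    using x y by (auto simp: mem_rel_cycles)
  have fin: "x \<in> fin_chains" "y \<in> fin_chains" "d1 \<in> fin_chains" "d2 \<in> fin_chains"
    "a1 \<in> fin_chains" "a2 \<in> fin_chains"
    using xI yI d12 a12 by (auto intro: inf_chains_fin_chains)
  define c where "c = x - bd d1 - a1"
  have c_alt: "c = y + bd d2 + a2"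
    using xy d12(3) a12(3) fin unfolding c_def by (simp add: algebra_simps)
  have "c \<in> inf_chains B1 n" "bd c \<in> inf_chains A1 (n - 1)"
    unfolding c_def using fin xI bd_in_inf_chains[OF d12(1)] inf_chains_A1_B1[OF a12(1)]
      bd_in_inf_chains[OF a12(1)] by (simp_all add: inf_chains_diff)
  moreover have "c \<in> inf_chains B2 n" "bd c \<in> inf_chains A2 (n - 1)"
    unfolding c_alt using fin yI bd_in_inf_chains[OF d12(2)] inf_chains_A2_B2[OF a12(2)]
      bd_in_inf_chains[OF a12(2)] by (simp_all add: inf_chains_add)
  ultimately have c: "c \<in> rel_cycles (B1 \<inter> B2) (A1 \<inter> A2) n"
    by (simp add: mem_rel_cycles inf_chains_Int)
  have "c - x \<in> rel_bounds B1 A1 n"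
    unfolding mem_rel_bounds c_def using d12(1) a12(1) fin
    by (intro exI[of _ "- d1"] exI[of _ "- a1"]) (simp add: inf_chains_uminus)
  moreover have "c - y \<in> rel_bounds B2 A2 n"
    unfolding mem_rel_bounds c_alt using d12(2) a12(2)
    by (intro exI[of _ d2] exI[of _ a2]) (simp add: algebra_simps)
  ultimately have "mv_f B1 A1 B2 A2 n (hclass (B1 \<inter> B2) (A1 \<inter> A2) n c) = S"
    using S_eq by (simp add: mv_f_hclass hclass_eq_iff)
  then show "S \<in> mv_f B1 A1 B2 A2 n ` carrier (H_Int n)"
    using c hclass_in_carrier by blast
qed

lemma image_mv_g_subset_kernel:
  "(mv_g B1 A1 B2 A2 n :: _ \<Rightarrow> ('v set \<Rightarrow> 'g::ab_group_add) set) ` carrier (H_sum n)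
     \<subseteq> kernel (H_Un n) (H_Int (n - 1)) (connecting_map n)"
proof
  fix Z :: "('v set \<Rightarrow> 'g) set"
  assume "Z \<in> mv_g B1 A1 B2 A2 n ` carrier (H_sum n)"
  then obtain x y where x: "x \<in> rel_cycles B1 A1 n" and y: "y \<in> rel_cycles B2 A2 n"
    and Z: "Z = mv_g B1 A1 B2 A2 n (hclass B1 A1 n x, hclass B2 A2 n y)"
    by (auto simp: DirProd_def carrier_rel_homology)
  have z: "x - y \<in> rel_cycles (B1 \<union> B2) (A1 \<union> A2) n"
    using rel_cycles_diff[OF rel_cycles_Un_1[OF x] rel_cycles_Un_2[OF y]] .
  have "x \<in> fin_chains" "y \<in> fin_chains"
    using x y by (auto simp: mem_rel_cycles intro: inf_chains_fin_chains)
  then have "conn_split n (x - y) x (- y) (bd x) (- bd y)"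
    using x y by (simp add: conn_split_def mem_rel_cycles inf_chains_uminus)
  then show "Z \<in> kernel (H_Un n) (H_Int (n - 1)) (connecting_map n)"
    using Z mv_g_hclass[OF x y] connecting_map_hclass[OF z] z
    by (simp add: kernel_def hclass_in_carrier hclass_eq_one_iff)
qed

text \<open>If the connecting map kills \<open>[z]\<close>, i.e. \<open>bd x - a1 = bd u + e\<close> over the intersection,
  then \<open>x - u\<close> and \<open>-(y + u)\<close> are relative cycles of the two pairs with difference \<open>z\<close>.\<close>

lemma kernel_connecting_map_subset_image:
  "kernel (H_Un n) (H_Int (n - 1)) (connecting_map n)
     \<subseteq> (mv_g B1 A1 B2 A2 n :: _ \<Rightarrow> ('v set \<Rightarrow> 'g::ab_group_add) set) ` carrier (H_sum n)"
proof
  fix Z :: "('v set \<Rightarrow> 'g) set"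
  assume Z: "Z \<in> kernel (H_Un n) (H_Int (n - 1)) (connecting_map n)"
  then obtain z where z: "z \<in> rel_cycles (B1 \<union> B2) (A1 \<union> A2) n" "Z = hclass (B1 \<union> B2) (A1 \<union> A2) n z"
    by (auto simp: kernel_def carrier_rel_homology)
  obtain x y a1 a2 where d: "conn_split n z x y a1 a2"
    using conn_split_exists[OF z(1)] .
  have "bd x - a1 \<in> rel_bounds (B1 \<inter> B2) (A1 \<inter> A2) (n - 1)"
    using Z z connecting_map_hclass[OF z(1) d] by (simp add: kernel_def hclass_eq_one_iff)
  then obtain u e where u: "u \<in> inf_chains B1 n" "u \<in> inf_chains B2 n"
    and e: "e \<in> inf_chains A1 (n - 1)" "e \<in> inf_chains A2 (n - 1)" and ue: "bd x - a1 = bd u + e"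
    unfolding mem_rel_bounds inf_chains_Int by auto
  have x: "x \<in> inf_chains B1 n" and y: "y \<in> inf_chains B2 n" and a1: "a1 \<in> inf_chains A1 (n - 1)"
    and a2: "a2 \<in> inf_chains A2 (n - 1)" and zxy: "z = x + y"
    using d by (auto simp: conn_split_def)
  have fin: "x \<in> fin_chains" "y \<in> fin_chains" "u \<in> fin_chains"
    using x y u by (auto intro: inf_chains_fin_chains)
  have "bd (x - u) = e + a1"
    using ue fin by (simp add: algebra_simps)
  then have x': "x - u \<in> rel_cycles B1 A1 n"
    using x u e a1 by (simp add: mem_rel_cycles inf_chains_diff inf_chains_add)
  have "bd (- (y + u)) = e - a2"
    using ue conn_split_bd[OF d] fin by (simp add: algebra_simps)
  then have y': "- (y + u) \<in> rel_cycles B2 A2 n"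
    using y u e a2 by (simp add: mem_rel_cycles inf_chains_diff inf_chains_add inf_chains_uminus)
  have "mv_g B1 A1 B2 A2 n (hclass B1 A1 n (x - u), hclass B2 A2 n (- (y + u))) = Z"
    using mv_g_hclass[OF x' y'] z zxy by (simp add: algebra_simps)
  moreover have "(hclass B1 A1 n (x - u), hclass B2 A2 n (- (y + u))) \<in> carrier (H_sum n)"
    using x' y' by (simp add: DirProd_def hclass_in_carrier)
  ultimately show "Z \<in> mv_g B1 A1 B2 A2 n ` carrier (H_sum n)"
    by blast
qed

lemma image_connecting_map_subset_kernel:
  "(connecting_map n :: ('v set \<Rightarrow> 'g::ab_group_add) set \<Rightarrow> _) ` carrier (H_Un n)
     \<subseteq> kernel (H_Int (n - 1)) (H_sum (n - 1)) (mv_f B1 A1 B2 A2 (n - 1))"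
proof
  fix S :: "('v set \<Rightarrow> 'g) set"
  assume "S \<in> connecting_map n ` carrier (H_Un n)"
  then obtain z where z: "z \<in> rel_cycles (B1 \<union> B2) (A1 \<union> A2) n"
    and S: "S = connecting_map n (hclass (B1 \<union> B2) (A1 \<union> A2) n z)"
    by (auto simp: carrier_rel_homology)
  obtain x y a1 a2 where d: "conn_split n z x y a1 a2"
    using conn_split_exists[OF z] .
  have x: "x \<in> inf_chains B1 n" and y: "y \<in> inf_chains B2 n"
    and a1: "a1 \<in> inf_chains A1 (n - 1)" and a2: "a2 \<in> inf_chains A2 (n - 1)"
    using d by (auto simp: conn_split_def)
  have "bd x - a1 \<in> rel_bounds B1 A1 (n - 1)"
    unfolding mem_rel_bounds using x a1
    by (intro exI[of _ x] exI[of _ "- a1"]) (simp add: inf_chains_uminus)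
  moreover have "bd x - a1 = bd (- y) + a2"
    using conn_split_bd[OF d] by (simp add: algebra_simps)
  then have "bd x - a1 \<in> rel_bounds B2 A2 (n - 1)"
    unfolding mem_rel_bounds using y a2
    by (intro exI[of _ "- y"] exI[of _ a2]) (simp add: inf_chains_uminus)
  ultimately show "S \<in> kernel (H_Int (n - 1)) (H_sum (n - 1)) (mv_f B1 A1 B2 A2 (n - 1))"
    using S connecting_map_hclass[OF z d] conn_split_rel_cycle[OF d]
    by (simp add: kernel_def hclass_in_carrier mv_f_hclass DirProd_def hclass_eq_one_iff)
qed

text \<open>A relative cycle \<open>c = bd p + a1 = bd q + a2\<close> bounding in both pairs is the image of the
  class of \<open>p - q\<close>.\<close>

lemma kernel_mv_f_subset_image:
  "kernel (H_Int (n - 1)) (H_sum (n - 1)) (mv_f B1 A1 B2 A2 (n - 1))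
     \<subseteq> (connecting_map n :: ('v set \<Rightarrow> 'g::ab_group_add) set \<Rightarrow> _) ` carrier (H_Un n)"
proof
  fix S :: "('v set \<Rightarrow> 'g) set"
  assume S: "S \<in> kernel (H_Int (n - 1)) (H_sum (n - 1)) (mv_f B1 A1 B2 A2 (n - 1))"
  then obtain c where c: "c \<in> rel_cycles (B1 \<inter> B2) (A1 \<inter> A2) (n - 1)"
    and S_eq: "S = hclass (B1 \<inter> B2) (A1 \<inter> A2) (n - 1) c"
    by (auto simp: kernel_def carrier_rel_homology)
  have "c \<in> rel_bounds B1 A1 (n - 1)" "c \<in> rel_bounds B2 A2 (n - 1)"
    using S S_eq by (auto simp: kernel_def mv_f_hclass DirProd_def hclass_eq_one_iff)
  then obtain p a1 q a2 where p: "p \<in> inf_chains B1 n" "a1 \<in> inf_chains A1 (n - 1)" "c = bd p + a1"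
    and q: "q \<in> inf_chains B2 n" "a2 \<in> inf_chains A2 (n - 1)" "c = bd q + a2"
    unfolding mem_rel_bounds by auto
  have bd_pq: "bd (p - q) = - a1 + a2"
    using p q inf_chains_fin_chains[of p] inf_chains_fin_chains[of q] by (simp add: algebra_simps)
  have "p \<in> inf_chains (B1 \<union> B2) n" "q \<in> inf_chains (B1 \<union> B2) n"
    "a1 \<in> inf_chains (A1 \<union> A2) (n - 1)" "a2 \<in> inf_chains (A1 \<union> A2) (n - 1)"
    using p q inf_chains_mono[of B1 "B1 \<union> B2" n] inf_chains_mono[of B2 "B1 \<union> B2" n]
      inf_chains_mono[of A1 "A1 \<union> A2" "n - 1"] inf_chains_mono[of A2 "A1 \<union> A2" "n - 1"]
    by blast+
  then have "p - q \<in> rel_cycles (B1 \<union> B2) (A1 \<union> A2) n"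
    using bd_pq by (simp add: mem_rel_cycles inf_chains_diff inf_chains_add inf_chains_uminus)
  moreover have "conn_split n (p - q) p (- q) (- a1) a2"
    using p q bd_pq by (simp add: conn_split_def inf_chains_uminus)
  ultimately have "connecting_map n (hclass (B1 \<union> B2) (A1 \<union> A2) n (p - q)) = S"
    using S_eq p(3) by (simp add: connecting_map_hclass)
  then show "S \<in> connecting_map n ` carrier (H_Un n)"
    using \<open>p - q \<in> _\<close> hclass_in_carrier by blast
qed

theorem MV_long_exact: "MV_long_exact TYPE('g::ab_group_add) B1 A1 B2 A2"
  unfolding MV_long_exact_def
  by (intro exI[of _ connecting_map] allI conjI mv_f_hom mv_g_hom connecting_map_hom subset_antisym
      image_mv_f_subset_kernel kernel_mv_g_subset_image image_mv_g_subset_kernel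
      kernel_connecting_map_subset_image image_connecting_map_subset_kernel kernel_mv_f_subset_image)

end

theorem mainTheorem8:
  fixes H H' :: "'v::linorder set set"
  assumes "hypergraph H" and "hypergraph H'"
    and "\<And>\<sigma> \<sigma>'. \<sigma> \<in> H \<Longrightarrow> \<sigma>' \<in> H' \<Longrightarrow> \<sigma> \<inter> \<sigma>' = {} \<or> \<sigma> \<inter> \<sigma>' \<in> H \<inter> H'"
  shows "MV_long_exact TYPE('g::ab_group_add) H (lower_cplx H) H' (lower_cplx H')
       \<and> MV_long_exact TYPE('g) (assoc_cplx H) H (assoc_cplx H') H'"
proof
  have compatible: "intersection_compatible H H'"
    using assms(3) by (simp add: intersection_compatible_def)
  have "lower_cplx H \<subseteq> H" "lower_cplx H' \<subseteq> H'"
    by (auto simp: lower_cplx_def)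
  then have "mayer_vietoris H (lower_cplx H) H' (lower_cplx H')"
    using compatible face_closed_imp_intersection_compatible[OF face_closed_lower_cplx face_closed_lower_cplx]
    by (simp add: mayer_vietoris_def)
  then show "MV_long_exact TYPE('g) H (lower_cplx H) H' (lower_cplx H')"
    by (rule mayer_vietoris.MV_long_exact)
  have "H \<subseteq> assoc_cplx H" "H' \<subseteq> assoc_cplx H'"
    using assms(1,2) by (auto simp: assoc_cplx_def hypergraph_def)
  then have "mayer_vietoris (assoc_cplx H) H (assoc_cplx H') H'"
    using compatible face_closed_imp_intersection_compatible[OF face_closed_assoc_cplx face_closed_assoc_cplx]
    by (simp add: mayer_vietoris_def)
  then show "MV_long_exact TYPE('g) (assoc_cplx H) H (assoc_cplx H') H'"
    by (rule mayer_vietoris.MV_long_exact)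
qed

end
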